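(* Let $n\in\mathbb{N}$, let $f:\mathbb{R}^n\to\mathbb{R}$ be a continuous convex function, let $\mathbf{X}=(X_1,\dots,X_n)$ with $X_i\in\mathcal{E}$, and let $\mathbb{F}$ be a conditional expectation on $\mathcal{E}$. Write $\mathbb{F}\mathbf{X}=(\mathbb{F}X_1,\dots,\mathbb{F}X_n)$. If $f(\mathbf{X})\in\mathcal{E}$, then $\mathbb{F}(f(\mathbf{X}))\ge f(\mathbb{F}\mathbf{X})$.
   Context: Let $\mathcal{E}$ be an order complete vector lattice with a weak order unit $E$, $K$ its Stone space (extremally disconnected compact Hausdorff), and $C^\infty(K)$ the vector lattice (and f-algebra) of continuous functions $K\to[-\infty,\infty]$ finite off a nowhere dense set (identified when equal off a nowhere dense set), which is the universal completion $\mathcal{E}^u$. Fix a Maeda–Ogasawara representation of $\mathcal{E}$ as an order dense ideal of $C^\infty(K)$ with $E$ corresponding to $\mathbf{1}$. For continuous $f:\mathbb{R}^n\to\mathbb{R}$ and $X_1,\dots,X_n\in C^\infty(K)$, $f(\mathbf{X})=f(X_1,\dots,X_n)$ denotes the unique element of $C^\infty(K)$ agreeing with $\omega\mapsto f(X_1(\omega),\dots,X_n(\omega))$ on the open dense set where all $X_i$ are finite. A conditional expectation on $\mathcal{E}$ is an order continuous, strictly positive linear projection $\mathbb{F}:\mathcal{E}\to\mathcal{E}$ whose range is an order complete vector sublattice of $\mathcal{E}$ and with $\mathbb{F}E=E$. *)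

theory Defs
  imports "HOL-Analysis.Analysis"
begin

definition extremally_disconnected :: "'k::topological_space itself \<Rightarrow> bool" where
  "extremally_disconnected _ \<longleftrightarrow> (\<forall>U::'k set. open U \<longrightarrow> open (closure U))"

definition fin_set :: "('k \<Rightarrow> ereal) \<Rightarrow> 'k set" where
  "fin_set g = {x. \<bar>g x\<bar> \<noteq> \<infinity>}"

text \<open>C^infinity(K): continuous functions K -> [-inf,inf] finite off a nowhere dense set.
  Since continuous functions into the Hausdorff space ereal agreeing on a dense set are equal,
  no quotient is needed; the finiteness set is open, so "finite off a nowhere dense set"
  amounts to density of the finiteness set.\<close>
definition Cinf :: "('k::topological_space \<Rightarrow> ereal) set" where
  "Cinf = {g. continuous_on UNIV g \<and> closure (fin_set g) = UNIV}"

definition cadd :: "('k::topological_space \<Rightarrow> ereal) \<Rightarrow> ('k \<Rightarrow> ereal) \<Rightarrow> ('k \<Rightarrow> ereal)" where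
  "cadd g h = (THE s. s \<in> Cinf \<and> (\<forall>x \<in> fin_set g \<inter> fin_set h. s x = g x + h x))"

definition cscale :: "real \<Rightarrow> ('k::topological_space \<Rightarrow> ereal) \<Rightarrow> ('k \<Rightarrow> ereal)" where
  "cscale c g = (THE s. s \<in> Cinf \<and> (\<forall>x \<in> fin_set g. s x = ereal c * g x))"

definition cinf_comp :: "(real^'n \<Rightarrow> real) \<Rightarrow> ('n \<Rightarrow> 'k::topological_space \<Rightarrow> ereal) \<Rightarrow> ('k \<Rightarrow> ereal)" where
  "cinf_comp f X = (THE s. s \<in> Cinf \<and>
     (\<forall>x. (\<forall>i. \<bar>X i x\<bar> \<noteq> \<infinity>) \<longrightarrow> s x = ereal (f (\<chi> i. real_of_ereal (X i x)))))"

definition order_dense_ideal_with_unit :: "('k::topological_space \<Rightarrow> ereal) set \<Rightarrow> bool" where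
  "order_dense_ideal_with_unit \<E> \<longleftrightarrow>
     \<E> \<subseteq> Cinf \<and>
     (\<lambda>_. 0) \<in> \<E> \<and>
     (\<forall>g\<in>\<E>. \<forall>h\<in>\<E>. cadd g h \<in> \<E>) \<and>
     (\<forall>c. \<forall>g\<in>\<E>. cscale c g \<in> \<E>) \<and>
     (\<forall>g\<in>Cinf. \<forall>h\<in>\<E>. (\<lambda>x. \<bar>g x\<bar>) \<le> (\<lambda>x. \<bar>h x\<bar>) \<longrightarrow> g \<in> \<E>) \<and>
     (\<forall>g\<in>Cinf. (\<lambda>_. 0) \<le> g \<and> g \<noteq> (\<lambda>_. 0) \<longrightarrow>
        (\<exists>h\<in>\<E>. (\<lambda>_. 0) \<le> h \<and> h \<noteq> (\<lambda>_. 0) \<and> h \<le> g)) \<and>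
     (\<lambda>_. 1) \<in> \<E>"

definition is_inf_in :: "('k \<Rightarrow> ereal) set \<Rightarrow> ('k \<Rightarrow> ereal) set \<Rightarrow> ('k \<Rightarrow> ereal) \<Rightarrow> bool" where
  "is_inf_in S D m \<longleftrightarrow> m \<in> S \<and> (\<forall>d\<in>D. m \<le> d) \<and> (\<forall>l\<in>S. (\<forall>d\<in>D. l \<le> d) \<longrightarrow> l \<le> m)"

definition is_sup_in :: "('k \<Rightarrow> ereal) set \<Rightarrow> ('k \<Rightarrow> ereal) set \<Rightarrow> ('k \<Rightarrow> ereal) \<Rightarrow> bool" where
  "is_sup_in S D m \<longleftrightarrow> m \<in> S \<and> (\<forall>d\<in>D. d \<le> m) \<and> (\<forall>u\<in>S. (\<forall>d\<in>D. d \<le> u) \<longrightarrow> m \<le> u)"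

text \<open>Conditional expectation on \<E>: order continuous, strictly positive linear projection
  whose range is an order complete vector sublattice, with F 1 = 1.
  Order continuity (for a positive operator): D downward directed with infimum 0 in \<E>
  implies F ` D has infimum 0 in \<E>.\<close>
definition cond_exp :: "('k::topological_space \<Rightarrow> ereal) set \<Rightarrow> (('k \<Rightarrow> ereal) \<Rightarrow> ('k \<Rightarrow> ereal)) \<Rightarrow> bool" where
  "cond_exp \<E> F \<longleftrightarrow>
     (\<forall>g\<in>\<E>. F g \<in> \<E>) \<and>
     (\<forall>g\<in>\<E>. \<forall>h\<in>\<E>. F (cadd g h) = cadd (F g) (F h)) \<and>
     (\<forall>c. \<forall>g\<in>\<E>. F (cscale c g) = cscale c (F g)) \<and>
     (\<forall>g\<in>\<E>. (\<lambda>_. 0) \<le> g \<and> g \<noteq> (\<lambda>_. 0) \<longrightarrow> (\<lambda>_. 0) \<le> F g \<and> F g \<noteq> (\<lambda>_. 0)) \<and>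
     (\<forall>g\<in>\<E>. F (F g) = F g) \<and>
     (\<forall>D. D \<subseteq> \<E> \<and> D \<noteq> {} \<and> (\<forall>a\<in>D. \<forall>b\<in>D. \<exists>c\<in>D. c \<le> a \<and> c \<le> b) \<and>
          is_inf_in \<E> D (\<lambda>_. 0) \<longrightarrow> is_inf_in \<E> (F ` D) (\<lambda>_. 0)) \<and>
     (\<forall>g\<in>F ` \<E>. \<forall>h\<in>F ` \<E>. sup g h \<in> F ` \<E> \<and> inf g h \<in> F ` \<E>) \<and>
     (\<forall>A. A \<subseteq> F ` \<E> \<and> A \<noteq> {} \<and> (\<exists>u\<in>F ` \<E>. \<forall>a\<in>A. a \<le> u) \<longrightarrow>
          (\<exists>s. is_sup_in (F ` \<E>) A s)) \<and>
     F (\<lambda>_. 1) = (\<lambda>_. 1)"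

end

theory Submission
  imports Defs
begin

text \<open>A continuous convex \<open>f\<close> is the supremum of its affine minorants \<open>c + \<langle>a, x\<rangle>\<close>.
  For each of them, \<open>c \<one> + \<Sum>\<^sub>i a\<^sub>i X\<^sub>i \<le> f(X)\<close> in \<open>\<E>\<close>; since \<open>F\<close> is positive, linear and fixes \<open>\<one>\<close>,
  this gives \<open>c + \<langle>a, F X\<rangle> \<le> F (f(X))\<close>, and the supremum over all minorants yields the claim.
  All comparisons are made pointwise on the dense open sets where the functions involved are
  finite. That elements of \<open>C\<^sup>\<infinity>(K)\<close> are determined by, and can be built from, continuous real
  functions on such sets rests on Stone's extension theorem for extremally disconnected spaces.\<close>

lemma continuous_on_UNIV_if_open_rays:
  fixes G :: "'a::topological_space \<Rightarrow> 'b::linorder_topology"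
  assumes "\<And>t. open {x. G x < t}" "\<And>t. open {x. t < G x}"
  shows "continuous_on UNIV G"
  by (rule continuous_on_generate_topology[OF open_generated_order])
     (use assms in \<open>force simp: vimage_def\<close>)

text \<open>Stone's construction: with \<open>A r\<close> the closure of \<open>{g < r}\<close>, which is open because the
  space is extremally disconnected, the extension is \<open>G w = Inf {r. w \<in> A r}\<close>.\<close>
lemma extremally_disconnected_continuous_extension:
  fixes g :: "'k::topological_space \<Rightarrow> ereal"
  assumes ed: "extremally_disconnected TYPE('k)"
    and U: "open U" and g: "continuous_on U g"
  shows "\<exists>G. continuous_on UNIV G \<and> (\<forall>x\<in>U. G x = g x)"
proof -
  have open_vimage: "open (U \<inter> g -` B)" if "open B" for B
    using continuous_on_open_vimage[OF U, of g] g that by (simp add: Int_commute)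
  define A where "A r = closure {x\<in>U. g x < ereal r}" for r
  define G where "G w = Inf {ereal r | r. w \<in> A r}" for w
  have A_open: "open (A r)" for r
  proof -
    have "{x\<in>U. g x < ereal r} = U \<inter> g -` {..<ereal r}" by auto
    then show ?thesis
      using ed open_vimage[of "{..<ereal r}"] unfolding extremally_disconnected_def A_def by simp
  qed
  have A_mono: "A r \<subseteq> A s" if "r \<le> s" for r s
    unfolding A_def using that by (intro closure_mono) (auto intro: less_le_trans)
  have G_le: "G w \<le> ereal r" if "w \<in> A r" for w r
    unfolding G_def using that by (auto intro: Inf_lower)
  have le_if_in_A: "g x \<le> ereal r" if "x \<in> U" "x \<in> A r" for x r
  proof (rule ccontr)
    assume "\<not> g x \<le> ereal r"
    then have "x \<in> U \<inter> g -` {ereal r<..}" using \<open>x \<in> U\<close> by auto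
    moreover have "(U \<inter> g -` {ereal r<..}) \<inter> A r = {}"
      unfolding A_def using open_vimage[of "{ereal r<..}"] open_Int_closure_eq_empty by fastforce
    ultimately show False using \<open>x \<in> A r\<close> by auto
  qed
  have G_eq: "G x = g x" if "x \<in> U" for x
  proof (rule antisym)
    show "G x \<le> g x"
    proof (rule dense_ge)
      fix z assume "g x < z"
      then obtain r where r: "g x < ereal r" "ereal r < z" using ereal_dense2 by blast
      then have "x \<in> A r" unfolding A_def using that closure_subset by fastforce
      then have "G x \<le> ereal r" by (rule G_le)
      then show "G x \<le> z" using r by simp
    qed
    show "g x \<le> G x" unfolding G_def using le_if_in_A that by (auto intro!: Inf_greatest)
  qed
  have "{x. G x < t} = (\<Union>r\<in>{r. ereal r < t}. A r)" for t
  proof safe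
    fix x assume "G x < t"
    then obtain y where "y \<in> {ereal r | r. x \<in> A r}" "y < t" unfolding G_def Inf_less_iff by blast
    then show "x \<in> (\<Union>r\<in>{r. ereal r < t}. A r)" by auto
  next
    fix x r assume "ereal r < t" "x \<in> A r"
    then show "G x < t" using G_le[of x r] by simp
  qed
  then have lower: "open {x. G x < t}" for t using A_open by (simp add: open_UN)
  have "{x. t < G x} = (\<Union>s\<in>{s. t < ereal s}. - A s)" for t
  proof safe
    fix x assume "t < G x"
    then obtain s where s: "t < ereal s" "ereal s < G x" using ereal_dense2 by blast
    then have "x \<notin> A s" using G_le[of x s] by auto
    then show "x \<in> (\<Union>s\<in>{s. t < ereal s}. - A s)" using s by auto
  next
    fix x s assume s: "t < ereal s" "x \<notin> A s"
    have "ereal s \<le> G x" unfolding G_def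
    proof (rule Inf_greatest, safe)
      fix r assume "x \<in> A r"
      then show "ereal s \<le> ereal r" using A_mono s(2) by (meson linorder_le_cases ereal_less_eq(3) subsetD)
    qed
    then show "t < G x" using s by simp
  qed
  then have upper: "open {x. t < G x}" for t unfolding A_def by (simp add: open_UN open_Compl)
  show ?thesis using continuous_on_UNIV_if_open_rays[OF lower upper] G_eq by blast
qed

lemma dense_open_Int:
  assumes "open A" "closure A = UNIV" "closure B = UNIV"
  shows "closure (A \<inter> B) = UNIV"
proof -
  have "A \<subseteq> closure (A \<inter> B)" using open_Int_closure_subset[OF assms(1), of B] assms(3) by simp
  then have "closure A \<subseteq> closure (A \<inter> B)" by (metis closure_closure closure_mono)
  then show ?thesis using assms(2) by auto
qed

lemma dense_open_INT:
  assumes "finite I" "\<And>i. i \<in> I \<Longrightarrow> open (A i) \<and> closure (A i) = UNIV"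
  shows "open (\<Inter>i\<in>I. A i) \<and> closure (\<Inter>i\<in>I. A i) = UNIV"
  using assms
proof (induction I rule: finite_induct)
  case (insert i I)
  then show ?case using dense_open_Int[of "A i" "\<Inter>i\<in>I. A i"] by auto
qed auto

lemma le_if_le_on_dense:
  fixes g h :: "'k::topological_space \<Rightarrow> 'a::linorder_topology"
  assumes "continuous_on UNIV g" "continuous_on UNIV h" "closure D = UNIV" "\<forall>x\<in>D. g x \<le> h x"
  shows "g \<le> h"
proof -
  have "closure D \<subseteq> {x. g x \<le> h x}"
    using closed_Collect_le[OF assms(1,2)] assms(4) by (intro closure_minimal) auto
  then show ?thesis using assms(3) by (auto simp: le_fun_def)
qed

lemma open_fin_set:
  assumes "continuous_on UNIV g"
  shows "open (fin_set g)"
proof -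
  have "fin_set g = g -` (UNIV - {\<infinity>, -\<infinity>})" unfolding fin_set_def by auto
  then show ?thesis using open_image_ereal assms by (simp add: open_vimage)
qed

lemma continuous_on_fin_set_real_of_ereal:
  assumes "continuous_on UNIV g"
  shows "continuous_on (fin_set g) (\<lambda>x. real_of_ereal (g x))"
  by (rule continuous_on_compose2[OF continuous_on_real continuous_on_subset[OF assms]])
     (auto simp: fin_set_def)

lemma Cinf_fin_set_open_dense:
  assumes "g \<in> Cinf"
  shows "open (fin_set g)" "closure (fin_set g) = UNIV"
  using assms open_fin_set unfolding Cinf_def by auto

lemma Cinf_common_fin_set_open_dense:
  fixes X :: "'n::finite \<Rightarrow> 'k::topological_space \<Rightarrow> ereal"
  assumes "\<forall>i. X i \<in> Cinf"
  shows "open (\<Inter>i. fin_set (X i)) \<and> closure (\<Inter>i. fin_set (X i)) = UNIV"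
  using dense_open_INT[of UNIV "\<lambda>i. fin_set (X i)"] Cinf_fin_set_open_dense assms by auto

lemma Cinf_eq_if_eq_on_dense:
  fixes g h :: "'k::t2_space \<Rightarrow> ereal"
  assumes "g \<in> Cinf" "h \<in> Cinf" "closure D = UNIV" "\<forall>x\<in>D. g x = h x"
  shows "g = h"
  using le_if_le_on_dense[of g h D] le_if_le_on_dense[of h g D] assms unfolding Cinf_def by auto

text \<open>This makes the descriptions in cadd, cscale and cinf_comp well defined.\<close>
lemma Cinf_ex1_extension:
  fixes U :: "'k::t2_space set"
  assumes ed: "extremally_disconnected TYPE('k)" and U: "open U" "closure U = UNIV"
    and \<phi>: "continuous_on U \<phi>" and \<psi>: "\<forall>x\<in>U. \<psi> x = ereal (\<phi> x)"
  shows "\<exists>!s. s \<in> Cinf \<and> (\<forall>x\<in>U. s x = \<psi> x)"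
proof -
  obtain G where G: "continuous_on UNIV G" "\<forall>x\<in>U. G x = ereal (\<phi> x)"
    using extremally_disconnected_continuous_extension[OF ed U(1), of "\<lambda>x. ereal (\<phi> x)"] \<phi>
    by (auto intro: continuous_intros)
  have "U \<subseteq> fin_set G" using G(2) unfolding fin_set_def by auto
  then have "closure (fin_set G) = UNIV" using U(2) closure_mono by blast
  then have "G \<in> Cinf \<and> (\<forall>x\<in>U. G x = \<psi> x)" using G \<psi> unfolding Cinf_def by auto
  then show ?thesis using Cinf_eq_if_eq_on_dense[of _ G U] U(2) by (intro ex1I[of _ G]) auto
qed

lemma cadd_characterization:
  fixes g h :: "'k::t2_space \<Rightarrow> ereal"
  assumes ed: "extremally_disconnected TYPE('k)" and g: "g \<in> Cinf" and h: "h \<in> Cinf"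
  shows "cadd g h \<in> Cinf \<and> (\<forall>x\<in>fin_set g \<inter> fin_set h. cadd g h x = g x + h x)"
proof -
  have "\<exists>!s. s \<in> Cinf \<and> (\<forall>x\<in>fin_set g \<inter> fin_set h. s x = g x + h x)"
  proof (rule Cinf_ex1_extension[OF ed, where \<phi> = "\<lambda>x. real_of_ereal (g x) + real_of_ereal (h x)"])
    show "open (fin_set g \<inter> fin_set h)" "closure (fin_set g \<inter> fin_set h) = UNIV"
      using Cinf_fin_set_open_dense[OF g] Cinf_fin_set_open_dense[OF h]
        dense_open_Int[of "fin_set g" "fin_set h"] by auto
    show "continuous_on (fin_set g \<inter> fin_set h) (\<lambda>x. real_of_ereal (g x) + real_of_ereal (h x))"
      using g h unfolding Cinf_def
      by (intro continuous_intros continuous_on_subset[OF continuous_on_fin_set_real_of_ereal]) auto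
  qed (auto simp: fin_set_def ereal_real)
  from theI'[OF this] show ?thesis unfolding cadd_def by simp
qed

lemma cscale_characterization:
  fixes g :: "'k::t2_space \<Rightarrow> ereal"
  assumes ed: "extremally_disconnected TYPE('k)" and g: "g \<in> Cinf"
  shows "cscale c g \<in> Cinf \<and> (\<forall>x\<in>fin_set g. cscale c g x = ereal c * g x)"
proof -
  have "\<exists>!s. s \<in> Cinf \<and> (\<forall>x\<in>fin_set g. s x = ereal c * g x)"
  proof (rule Cinf_ex1_extension[OF ed, where \<phi> = "\<lambda>x. c * real_of_ereal (g x)"])
    show "open (fin_set g)" "closure (fin_set g) = UNIV"
      using Cinf_fin_set_open_dense[OF g] by auto
    show "continuous_on (fin_set g) (\<lambda>x. c * real_of_ereal (g x))"
      using g unfolding Cinf_def by (intro continuous_intros continuous_on_fin_set_real_of_ereal) auto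
  qed (auto simp: fin_set_def ereal_real)
  from theI'[OF this] show ?thesis unfolding cscale_def by simp
qed

lemma cinf_comp_characterization:
  fixes X :: "'n::finite \<Rightarrow> 'k::t2_space \<Rightarrow> ereal"
  assumes ed: "extremally_disconnected TYPE('k)" and X: "\<forall>i. X i \<in> Cinf"
    and f: "continuous_on UNIV f"
  shows "cinf_comp f X \<in> Cinf \<and>
    (\<forall>x. (\<forall>i. \<bar>X i x\<bar> \<noteq> \<infinity>) \<longrightarrow> cinf_comp f X x = ereal (f (\<chi> i. real_of_ereal (X i x))))"
proof -
  define U where "U = {x. \<forall>i. \<bar>X i x\<bar> \<noteq> \<infinity>}"
  have U_eq: "U = (\<Inter>i. fin_set (X i))" unfolding U_def fin_set_def by (simp add: set_eq_iff)
  have "\<exists>!s. s \<in> Cinf \<and> (\<forall>x\<in>U. s x = ereal (f (\<chi> i. real_of_ereal (X i x))))"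
  proof (rule Cinf_ex1_extension[OF ed])
    show "open U" "closure U = UNIV"
      using Cinf_common_fin_set_open_dense[OF X] unfolding U_eq by auto
    have "continuous_on U (\<lambda>x. \<chi> i. real_of_ereal (X i x))"
      using X unfolding U_eq Cinf_def
      by (intro continuous_on_vec_lambda continuous_on_subset[OF continuous_on_fin_set_real_of_ereal])
         auto
    then show "continuous_on U (\<lambda>x. f (\<chi> i. real_of_ereal (X i x)))"
      using continuous_on_compose2[OF f] by blast
  qed auto
  from theI'[OF this] show ?thesis unfolding cinf_comp_def U_def by simp
qed

lemma cadd_ereal:
  fixes g h :: "'k::t2_space \<Rightarrow> ereal"
  assumes ed: "extremally_disconnected TYPE('k)" and "g \<in> Cinf" "h \<in> Cinf"
    and "g x = ereal p" "h x = ereal q"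
  shows "cadd g h x = ereal (p + q)"
  using cadd_characterization[OF assms(1-3)] assms(4,5) unfolding fin_set_def by auto

lemma cscale_ereal:
  fixes g :: "'k::t2_space \<Rightarrow> ereal"
  assumes ed: "extremally_disconnected TYPE('k)" and "g \<in> Cinf" "g x = ereal p"
  shows "cscale c g x = ereal (c * p)"
  using cscale_characterization[OF assms(1,2)] assms(3) unfolding fin_set_def by auto

lemma zero_Cinf: "(\<lambda>_. 0) \<in> Cinf"
  unfolding Cinf_def fin_set_def by auto

lemma cscale_zero:
  fixes g :: "'k::t2_space \<Rightarrow> ereal"
  assumes ed: "extremally_disconnected TYPE('k)" and g: "g \<in> Cinf"
  shows "cscale 0 g = (\<lambda>_. 0)"
  using Cinf_eq_if_eq_on_dense[OF _ zero_Cinf Cinf_fin_set_open_dense(2)[OF g]]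
    cscale_characterization[OF ed g, of 0] unfolding fin_set_def by auto

lemma Cinf_diff_nonneg_iff:
  fixes g h :: "'k::t2_space \<Rightarrow> ereal"
  assumes ed: "extremally_disconnected TYPE('k)" and g: "g \<in> Cinf" and h: "h \<in> Cinf"
  shows "(\<lambda>_. 0) \<le> cadd h (cscale (-1) g) \<longleftrightarrow> g \<le> h"
proof -
  let ?d = "cadd h (cscale (-1) g)"
  define D where "D = fin_set g \<inter> fin_set h"
  have D: "closure D = UNIV"
    using Cinf_fin_set_open_dense[OF g] Cinf_fin_set_open_dense[OF h]
      dense_open_Int[of "fin_set g" "fin_set h"] unfolding D_def by auto
  have gC: "cscale (-1) g \<in> Cinf" using cscale_characterization[OF ed g] by blast
  have d: "?d \<in> Cinf" using cadd_characterization[OF ed h gC] by blast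
  have "?d x = ereal (real_of_ereal (h x) + (-1) * real_of_ereal (g x))" if "x \<in> D" for x
    using that unfolding D_def fin_set_def
    by (intro cadd_ereal[OF ed h gC] cscale_ereal[OF ed g]) (auto simp: ereal_real)
  then have pointwise: "0 \<le> ?d x \<longleftrightarrow> g x \<le> h x" if "x \<in> D" for x
    using that unfolding D_def fin_set_def by (auto simp: ereal_real)
  have cont: "continuous_on UNIV g" "continuous_on UNIV h" "continuous_on UNIV ?d"
    using g h d unfolding Cinf_def by auto
  show ?thesis
  proof
    assume "(\<lambda>_. 0) \<le> ?d"
    then show "g \<le> h"
      using pointwise by (intro le_if_le_on_dense[OF cont(1,2) D]) (auto simp: le_fun_def)
  next
    assume "g \<le> h"
    then show "(\<lambda>_. 0) \<le> ?d"
      using pointwise by (intro le_if_le_on_dense[OF _ cont(3) D]) (auto simp: le_fun_def)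
  qed
qed

primrec lincomb :: "('n \<Rightarrow> real) \<Rightarrow> ('n \<Rightarrow> 'k::topological_space \<Rightarrow> ereal) \<Rightarrow> 'n list \<Rightarrow> 'k \<Rightarrow> ereal"
  where
    "lincomb a X [] = (\<lambda>_. 0)"
  | "lincomb a X (i # is) = cadd (cscale (a i) (X i)) (lincomb a X is)"

lemma lincomb_Cinf:
  fixes X :: "'n \<Rightarrow> 'k::t2_space \<Rightarrow> ereal"
  assumes ed: "extremally_disconnected TYPE('k)" and X: "\<forall>i. X i \<in> Cinf"
  shows "lincomb a X is \<in> Cinf"
  by (induction "is") (use zero_Cinf cadd_characterization[OF ed] cscale_characterization[OF ed] X
      in auto)

lemma lincomb_ereal:
  fixes X :: "'n \<Rightarrow> 'k::t2_space \<Rightarrow> ereal"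
  assumes ed: "extremally_disconnected TYPE('k)" and X: "\<forall>i. X i \<in> Cinf"
    and x: "\<forall>i. \<bar>X i x\<bar> \<noteq> \<infinity>"
  shows "lincomb a X is x = ereal (\<Sum>i\<leftarrow>is. a i * real_of_ereal (X i x))"
proof (induction "is")
  case (Cons j "is")
  have "cscale (a j) (X j) x = ereal (a j * real_of_ereal (X j x))"
    using X x by (intro cscale_ereal[OF ed]) (auto simp: ereal_real)
  then show ?case
    using Cons cadd_ereal[OF ed _ lincomb_Cinf[OF ed X]] cscale_characterization[OF ed] X by simp
qed simp

lemma convex_on_affine_minorant:
  fixes f :: "'a::euclidean_space \<Rightarrow> real"
  assumes f: "continuous_on UNIV f" "convex_on UNIV f" and e: "e > 0"
  shows "\<exists>a c. (\<forall>x. c + inner a x \<le> f x) \<and> f y - e < c + inner a y"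
proof -
  have "epigraph UNIV f = {p. f (fst p) \<le> snd p}" by (auto simp: epigraph_def)
  then have "closed (epigraph UNIV f)"
    by (simp only:)
       (rule closed_Collect_le; auto intro!: continuous_intros continuous_on_compose2[OF f(1)])
  moreover have "convex (epigraph UNIV f)" using convex_epigraphI[OF f(2)] .
  moreover have "(y, f y - e) \<notin> epigraph UNIV f" using e by (simp add: mem_epigraph)
  ultimately obtain w b where wb: "inner w (y, f y - e) < b" "\<forall>p\<in>epigraph UNIV f. b < inner w p"
    using separating_hyperplane_closed_point by blast
  obtain a t where w: "w = (a, t)" by fastforce
  have below: "inner a y + t * (f y - e) < b" using wb(1) w by simp
  have above: "b < inner a x + t * f x" for x
    using wb(2) w mem_epigraph[of x "f x" UNIV f] by auto
  have "t * e > 0" using below above[of y] by (simp add: algebra_simps)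
  then have t: "t > 0" using e by (simp add: zero_less_mult_iff)
  show ?thesis
  proof (intro exI conjI allI)
    show "b / t + inner (- (1 / t) *\<^sub>R a) x \<le> f x" for x
      using above[of x] t by (simp add: field_simps)
    show "f y - e < b / t + inner (- (1 / t) *\<^sub>R a) y"
      using below t by (simp add: field_simps)
  qed
qed

lemma convex_on_le_if_affine_minorants_le:
  fixes f :: "'a::euclidean_space \<Rightarrow> real"
  assumes f: "continuous_on UNIV f" "convex_on UNIV f"
    and minorants: "\<And>a c. \<forall>x. c + inner a x \<le> f x \<Longrightarrow> ereal (c + inner a y) \<le> r"
  shows "ereal (f y) \<le> r"
proof (rule ereal_le_epsilon2)
  fix e :: real assume "0 < e"
  then obtain a c where minorant: "\<forall>x. c + inner a x \<le> f x" and close: "f y - e < c + inner a y"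
    using convex_on_affine_minorant[OF f] by blast
  have "ereal (f y) \<le> ereal (c + inner a y) + ereal e" using close by simp
  also have "\<dots> \<le> r + ereal e" using minorants[OF minorant] by (rule add_right_mono)
  finally show "ereal (f y) \<le> r + ereal e" .
qed

locale cond_exp_space =
  fixes \<E> :: "('k::t2_space \<Rightarrow> ereal) set"
    and F :: "('k \<Rightarrow> ereal) \<Rightarrow> ('k \<Rightarrow> ereal)"
  assumes extremally_disconnected: "extremally_disconnected TYPE('k)"
    and order_dense_ideal: "order_dense_ideal_with_unit \<E>"
    and cond_exp: "cond_exp \<E> F"
begin

lemma E_subset_Cinf: "\<E> \<subseteq> Cinf"
  using order_dense_ideal unfolding order_dense_ideal_with_unit_def by (elim conjE)

lemma zero_in_E: "(\<lambda>_. 0) \<in> \<E>"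
  using order_dense_ideal unfolding order_dense_ideal_with_unit_def by (elim conjE)

lemma one_in_E: "(\<lambda>_. 1) \<in> \<E>"
  using order_dense_ideal unfolding order_dense_ideal_with_unit_def by (elim conjE)

lemma cadd_in_E: "g \<in> \<E> \<Longrightarrow> h \<in> \<E> \<Longrightarrow> cadd g h \<in> \<E>"
  using order_dense_ideal unfolding order_dense_ideal_with_unit_def by (elim conjE) simp

lemma cscale_in_E: "g \<in> \<E> \<Longrightarrow> cscale c g \<in> \<E>"
  using order_dense_ideal unfolding order_dense_ideal_with_unit_def by (elim conjE) simp

lemma F_in_E: "g \<in> \<E> \<Longrightarrow> F g \<in> \<E>"
  using cond_exp unfolding cond_exp_def by (elim conjE) simp

lemma F_cadd: "g \<in> \<E> \<Longrightarrow> h \<in> \<E> \<Longrightarrow> F (cadd g h) = cadd (F g) (F h)"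
  using cond_exp unfolding cond_exp_def by (elim conjE) simp

lemma F_cscale: "g \<in> \<E> \<Longrightarrow> F (cscale c g) = cscale c (F g)"
  using cond_exp unfolding cond_exp_def by (elim conjE) simp

lemma F_one: "F (\<lambda>_. 1) = (\<lambda>_. 1)"
  using cond_exp unfolding cond_exp_def by (elim conjE)

lemma F_zero: "F (\<lambda>_. 0) = (\<lambda>_. 0)"
proof -
  have "F (\<lambda>_. 0) \<in> Cinf" using E_subset_Cinf zero_in_E F_in_E by blast
  have "F (\<lambda>_. 0) = F (cscale 0 (\<lambda>_. 0))" using cscale_zero[OF extremally_disconnected zero_Cinf] by simp
  also have "\<dots> = cscale 0 (F (\<lambda>_. 0))" using F_cscale zero_in_E by blast
  also have "\<dots> = (\<lambda>_. 0)" using cscale_zero[OF extremally_disconnected \<open>F (\<lambda>_. 0) \<in> Cinf\<close>] .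
  finally show ?thesis .
qed

lemma F_nonneg:
  assumes "g \<in> \<E>" "(\<lambda>_. 0) \<le> g"
  shows "(\<lambda>_. 0) \<le> F g"
proof (cases "g = (\<lambda>_. 0)")
  case False
  with assms cond_exp show ?thesis unfolding cond_exp_def by (elim conjE) simp
qed (simp add: F_zero)

lemma F_mono:
  assumes g: "g \<in> \<E>" and h: "h \<in> \<E>" and "g \<le> h"
  shows "F g \<le> F h"
proof -
  have Cinf: "g \<in> Cinf" "h \<in> Cinf" "F g \<in> Cinf" "F h \<in> Cinf"
    using g h E_subset_Cinf F_in_E by auto
  have "(\<lambda>_. 0) \<le> cadd h (cscale (-1) g)"
    using Cinf_diff_nonneg_iff[OF extremally_disconnected Cinf(1,2)] \<open>g \<le> h\<close> by blast
  then have "(\<lambda>_. 0) \<le> F (cadd h (cscale (-1) g))"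
    using g h by (intro F_nonneg cadd_in_E cscale_in_E)
  also have "F (cadd h (cscale (-1) g)) = cadd (F h) (cscale (-1) (F g))"
    using g h by (simp add: F_cadd F_cscale cscale_in_E)
  finally show ?thesis using Cinf_diff_nonneg_iff[OF extremally_disconnected Cinf(3,4)] by blast
qed

lemma lincomb_in_E: "\<forall>i. X i \<in> \<E> \<Longrightarrow> lincomb a X is \<in> \<E>"
  by (induction "is") (auto intro: zero_in_E cadd_in_E cscale_in_E)

lemma F_lincomb: "\<forall>i. X i \<in> \<E> \<Longrightarrow> F (lincomb a X is) = lincomb a (\<lambda>i. F (X i)) is"
  by (induction "is") (simp_all add: F_zero F_cadd F_cscale cscale_in_E lincomb_in_E)

lemma affine_minorant_le_F_cinf_comp:
  fixes f :: "real^'n \<Rightarrow> real" and X :: "'n \<Rightarrow> 'k \<Rightarrow> ereal"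
  assumes X: "\<forall>i. X i \<in> \<E>" and f: "continuous_on UNIV f" and fX: "cinf_comp f X \<in> \<E>"
    and minorant: "\<forall>x. c + inner a x \<le> f x" and w: "\<forall>i. \<bar>F (X i) w\<bar> \<noteq> \<infinity>"
  shows "ereal (c + inner a (\<chi> i. real_of_ereal (F (X i) w))) \<le> F (cinf_comp f X) w"
proof -
  note ed = extremally_disconnected
  obtain xs :: "'n list" where xs: "set xs = UNIV" "distinct xs"
    using finite_distinct_list[of "UNIV :: 'n set"] by auto
  define L where "L Y = cadd (cscale c (\<lambda>_. 1)) (lincomb (($) a) Y xs)"
    for Y :: "'n \<Rightarrow> 'k \<Rightarrow> ereal"
  have L_in_E: "L Y \<in> \<E>" if "\<forall>i. Y i \<in> \<E>" for Y
    unfolding L_def using that by (intro cadd_in_E cscale_in_E one_in_E lincomb_in_E)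
  have L_ereal: "L Y x = ereal (c + inner a (\<chi> i. real_of_ereal (Y i x)))"
    if Y: "\<forall>i. Y i \<in> \<E>" and x: "\<forall>i. \<bar>Y i x\<bar> \<noteq> \<infinity>" for Y x
  proof -
    have YC: "\<forall>i. Y i \<in> Cinf" using Y E_subset_Cinf by auto
    have "lincomb (($) a) Y xs x = ereal (inner a (\<chi> i. real_of_ereal (Y i x)))"
      using lincomb_ereal[OF ed YC x] xs
      by (simp add: sum_list_distinct_conv_sum_set inner_vec_def)
    moreover have "cscale c (\<lambda>_. 1) x = ereal (c * 1)"
      using one_in_E E_subset_Cinf by (intro cscale_ereal[OF ed]) auto
    ultimately show ?thesis
      unfolding L_def using one_in_E E_subset_Cinf lincomb_Cinf[OF ed YC]
        cscale_characterization[OF ed] by (subst cadd_ereal[OF ed]) auto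
  qed
  have "L X \<le> cinf_comp f X"
  proof (rule le_if_le_on_dense)
    have XC: "\<forall>i. X i \<in> Cinf" using X E_subset_Cinf by auto
    show "closure (\<Inter>i. fin_set (X i)) = UNIV"
      using Cinf_common_fin_set_open_dense[OF XC] by blast
    show "continuous_on UNIV (L X)" "continuous_on UNIV (cinf_comp f X)"
      using L_in_E[OF X] fX E_subset_Cinf unfolding Cinf_def by auto
    show "\<forall>x\<in>\<Inter>i. fin_set (X i). L X x \<le> cinf_comp f X x"
      using L_ereal[OF X] cinf_comp_characterization[OF ed XC f] minorant
      unfolding fin_set_def by auto
  qed
  then have "F (L X) \<le> F (cinf_comp f X)" by (rule F_mono[OF L_in_E[OF X] fX])
  moreover have "F (L X) = L (\<lambda>i. F (X i))"
    unfolding L_def using X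
    by (simp add: F_cadd F_cscale F_one F_lincomb one_in_E cscale_in_E lincomb_in_E)
  moreover have "L (\<lambda>i. F (X i)) w = ereal (c + inner a (\<chi> i. real_of_ereal (F (X i) w)))"
    using X w F_in_E by (intro L_ereal) auto
  ultimately show ?thesis by (metis le_funD)
qed

theorem conditional_jensen:
  fixes f :: "real^'n \<Rightarrow> real" and X :: "'n \<Rightarrow> 'k \<Rightarrow> ereal"
  assumes f: "continuous_on UNIV f" "convex_on UNIV f"
    and X: "\<forall>i. X i \<in> \<E>" and fX: "cinf_comp f X \<in> \<E>"
  shows "cinf_comp f (\<lambda>i. F (X i)) \<le> F (cinf_comp f X)"
proof (rule le_if_le_on_dense)
  let ?Y = "\<lambda>i. F (X i)"
  have Y: "\<forall>i. ?Y i \<in> Cinf" using X F_in_E E_subset_Cinf by auto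
  note fY = cinf_comp_characterization[OF extremally_disconnected Y f(1)]
  show "closure (\<Inter>i. fin_set (?Y i)) = UNIV"
    using Cinf_common_fin_set_open_dense[OF Y] by blast
  show "continuous_on UNIV (cinf_comp f ?Y)" "continuous_on UNIV (F (cinf_comp f X))"
    using fY fX F_in_E E_subset_Cinf unfolding Cinf_def by auto
  show "\<forall>w\<in>\<Inter>i. fin_set (?Y i). cinf_comp f ?Y w \<le> F (cinf_comp f X) w"
  proof
    fix w assume "w \<in> (\<Inter>i. fin_set (?Y i))"
    then have w: "\<forall>i. \<bar>?Y i w\<bar> \<noteq> \<infinity>" by (simp add: fin_set_def)
    then have "cinf_comp f ?Y w = ereal (f (\<chi> i. real_of_ereal (?Y i w)))" using fY by blast
    also have "\<dots> \<le> F (cinf_comp f X) w"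
      using affine_minorant_le_F_cinf_comp[OF X f(1) fX _ w]
      by (rule convex_on_le_if_affine_minorants_le[OF f])
    finally show "cinf_comp f ?Y w \<le> F (cinf_comp f X) w" .
  qed
qed

end

theorem mainTheorem9:
  fixes \<E> :: "('k::t2_space \<Rightarrow> ereal) set"
    and F :: "('k \<Rightarrow> ereal) \<Rightarrow> ('k \<Rightarrow> ereal)"
    and f :: "real^'n \<Rightarrow> real"
    and X :: "'n \<Rightarrow> 'k \<Rightarrow> ereal"
  assumes "compact (UNIV :: 'k set)"
    and "extremally_disconnected TYPE('k)"
    and "order_dense_ideal_with_unit \<E>"
    and "continuous_on UNIV f"
    and "convex_on UNIV f"
    and "\<forall>i. X i \<in> \<E>"
    and "cond_exp \<E> F"
    and "cinf_comp f X \<in> \<E>"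
  shows "cinf_comp f (\<lambda>i. F (X i)) \<le> F (cinf_comp f X)"
proof -
  interpret cond_exp_space \<E> F
    using assms(2,3,7) by unfold_locales
  show ?thesis using conditional_jensen assms(4-6,8) by blast
qed

end
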